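(* There exists no real polynomial $P(x)=a_{11}x^{11}+a_{10}x^{10}+\cdots+a_0$ with $a_{11}>0$, $a_{10},a_9,a_8,a_7,a_6<0$, $a_5,a_4,a_3,a_2,a_1>0$, $a_0<0$, which has a single positive root, this root being simple, negative roots of total multiplicity $8$ (counted with multiplicity), and a pair of complex conjugate non-real roots with nonpositive real part. *)

theory Defs
  imports Complex_Main "HOL-Computational_Algebra.Polynomial"
begin

end

theory Submission
  imports Defs "HOL-Computational_Algebra.Fundamental_Theorem_Algebra"
begin

text \<open>
  Let \<open>x\<^sub>0\<close> be the positive root. The hypotheses account for at least
  \<open>1 + 2 + 8 = 11\<close> complex roots, so these are all of them, \<open>x\<^sub>0\<close> is simple, and every
  other root has nonpositive real part. By Vieta, the signs of \<open>a\<^sub>1\<^sub>1, a\<^sub>1\<^sub>0\<close> give a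
  positive sum of the roots and the signs of \<open>a\<^sub>1, a\<^sub>0\<close> a positive sum of their
  reciprocals (in real part). Choosing a negative root \<open>r\<close>, the first forces
  \<open>x\<^sub>0 > -r\<close>, while the second, since \<open>Re (1/a) \<le> 0\<close> whenever \<open>Re a \<le> 0\<close>,
  forces \<open>1/x\<^sub>0 > -1/r\<close>, i.e. \<open>x\<^sub>0 < -r\<close>.
\<close>

lemma sum_count_le_size:
  assumes "finite A"
  shows "(\<Sum>a\<in>A. count M a) \<le> size M"
proof -
  have "(\<Sum>a\<in>A. count M a) = (\<Sum>a\<in>A \<inter> set_mset M. count M a)"
    using assms by (intro sum.mono_neutral_right) auto
  also have "\<dots> \<le> (\<Sum>a\<in>set_mset M. count M a)"
    by (intro sum_mono2) auto
  also have "\<dots> = size M"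
    by (simp add: size_multiset_overloaded_eq)
  finally show ?thesis .
qed

lemma set_mset_remove1_subset_if_size_le:
  assumes A: "finite A" and x: "x \<in># M" "x \<notin> A"
    and size: "size M \<le> Suc (\<Sum>a\<in>A. count M a)"
  shows "set_mset (M - {#x#}) \<subseteq> A"
proof
  fix b
  assume b: "b \<in># M - {#x#}"
  show "b \<in> A"
  proof (rule ccontr)
    assume bA: "b \<notin> A"
    show False
    proof (cases "b = x")
      case True
      then have "count M x \<ge> 2"
        using b by (simp add: in_diff_count)
      moreover have "(\<Sum>a\<in>insert x A. count M a) \<le> size M"
        using A by (intro sum_count_le_size) simp
      ultimately show False
        using A x size by simp
    next
      case False
      have "count M b \<ge> 1" "count M x \<ge> 1"
        using in_diffD[OF b] x by (simp_all add: Suc_le_eq)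
      moreover have "count M b + (count M x + (\<Sum>a\<in>A. count M a)) \<le> size M"
        using sum_count_le_size[of "insert b (insert x A)" M] A x bA False by simp
      ultimately show False
        using size by linarith
    qed
  qed
qed

lemma Re_sum_mset_nonpos: "\<forall>a\<in>#A. Re a \<le> 0 \<Longrightarrow> Re (sum_mset A) \<le> 0"
  by (induction A) auto

lemma Re_inverse_nonpos: "Re a \<le> 0 \<Longrightarrow> Re (1 / a) \<le> 0"
  by (simp add: Re_divide divide_nonpos_nonneg)

lemma map_poly_of_real_mult:
  "map_poly (of_real :: real \<Rightarrow> 'a::{real_algebra_1,comm_ring_1}) (p * q) =
     map_poly of_real p * map_poly of_real q"
  by (rule poly_eqI) (simp add: coeff_map_poly coeff_mult)

lemma map_poly_of_real_power:
  "map_poly (of_real :: real \<Rightarrow> 'a::{real_algebra_1,comm_ring_1}) (p ^ n) = map_poly of_real p ^ n"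
  by (induction n) (simp_all add: map_poly_of_real_mult)

lemma poly_map_poly_of_real:
  "poly (map_poly (of_real :: real \<Rightarrow> 'a::{real_algebra_1,comm_ring_1}) p) (of_real x) = of_real (poly p x)"
  by (induction p) (auto simp: map_poly_pCons)

lemma order_le_order_map_poly_of_real:
  assumes "p \<noteq> 0"
  shows "order x p \<le> order (of_real x) (map_poly (of_real :: real \<Rightarrow> 'a::{real_algebra_1,idom}) p)"
proof -
  obtain q where "p = [:-x, 1:] ^ order x p * q"
    using order_1 dvdE by metis
  then have "map_poly of_real p = map_poly of_real ([:-x, 1:] ^ order x p) * (map_poly of_real q :: 'a poly)"
    by (metis map_poly_of_real_mult)
  also have "\<dots> = [:-of_real x, 1:] ^ order x p * map_poly of_real q"
    by (simp add: map_poly_of_real_power map_poly_pCons)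
  finally have "map_poly of_real p = [:-of_real x, 1:] ^ order x p * (map_poly of_real q :: 'a poly)" .
  then have "[:-of_real x, 1:] ^ order x p dvd (map_poly of_real p :: 'a poly)"
    by simp
  moreover have "(map_poly of_real p :: 'a poly) \<noteq> 0"
    using assms by (simp add: map_poly_eq_0_iff)
  ultimately show ?thesis
    using order_divides by blast
qed

lemma sum_order_le_sum_count_proots_map_poly_of_real:
  fixes P :: "real poly"
  assumes "finite N" "P \<noteq> 0"
  shows "(\<Sum>x\<in>N. order x P) \<le> (\<Sum>a\<in>of_real ` N. count (proots (map_poly of_real P)) (a :: complex))"
proof -
  have "(\<Sum>x\<in>N. order x P) \<le> (\<Sum>x\<in>N. count (proots (map_poly of_real P)) (of_real x :: complex))"
    using assms by (intro sum_mono) (simp add: map_poly_eq_0_iff order_le_order_map_poly_of_real)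
  also have "\<dots> = (\<Sum>a\<in>of_real ` N. count (proots (map_poly of_real P)) (a :: complex))"
    by (simp add: sum.reindex inj_on_def)
  finally show ?thesis .
qed

lemma coeff_linear_factor_mult:
  fixes a :: "'a::comm_ring_1"
  shows "coeff ([:-a, 1:] * q) n = (if n = 0 then 0 else coeff q (n - 1)) - a * coeff q n"
  by (cases n) (simp_all add: algebra_simps)

lemma degree_prod_linear_factors_le:
  fixes M :: "'a::comm_ring_1 multiset"
  shows "degree (\<Prod>a\<in>#M. [:-a, 1:]) \<le> size M"
proof (induction M)
  case (add a M)
  have "degree ([:-a, 1:] * (\<Prod>a\<in>#M. [:-a, 1:])) \<le> 1 + degree (\<Prod>a\<in>#M. [:-a, 1:])"
    using degree_mult_le[of "[:-a, 1:]"] by simp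
  with add.IH show ?case by simp
qed simp

lemma coeff_prod_linear_factors_size:
  fixes M :: "'a::comm_ring_1 multiset"
  shows "coeff (\<Prod>a\<in>#M. [:-a, 1:]) (size M) = 1"
proof (induction M)
  case (add a M)
  have "coeff (\<Prod>a\<in>#M. [:-a, 1:]) (Suc (size M)) = 0"
    using degree_prod_linear_factors_le[of M] by (intro coeff_eq_0) simp
  with add.IH show ?case by (simp add: coeff_linear_factor_mult)
qed simp

lemma coeff_prod_linear_factors_pred_size:
  fixes M :: "'a::comm_ring_1 multiset"
  shows "size M = Suc n \<Longrightarrow> coeff (\<Prod>a\<in>#M. [:-a, 1:]) n = - sum_mset M"
proof (induction M arbitrary: n)
  case (add a M)
  then have "size M = n" by simp
  with add.IH coeff_prod_linear_factors_size[of M] show ?case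
    by (cases n) (simp_all add: coeff_linear_factor_mult)
qed simp

lemma coeff_1_prod_linear_factors:
  fixes M :: "'a::field multiset"
  shows "0 \<notin># M \<Longrightarrow> coeff (\<Prod>a\<in>#M. [:-a, 1:]) 1 = - coeff (\<Prod>a\<in>#M. [:-a, 1:]) 0 * (\<Sum>a\<in>#M. 1 / a)"
proof (induction M)
  case (add a M)
  then show ?case by (auto simp: coeff_linear_factor_mult field_simps)
qed simp

lemma coeff_pred_degree_complex_poly:
  fixes p :: "complex poly"
  assumes "degree p = Suc n"
  shows "coeff p n = - lead_coeff p * sum_mset (proots p)"
proof -
  have "coeff p n = lead_coeff p * coeff (\<Prod>a\<in>#proots p. [:-a, 1:]) n"
    by (metis coeff_smult complex_poly_decompose_multiset)
  then show ?thesis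
    using coeff_prod_linear_factors_pred_size[of "proots p" n] assms
    by (simp add: size_proots_complex)
qed

lemma coeff_1_complex_poly:
  fixes p :: "complex poly"
  assumes "poly p 0 \<noteq> 0"
  shows "coeff p 1 = - coeff p 0 * (\<Sum>a\<in>#proots p. 1 / a)"
proof -
  define Q where "Q = (\<Prod>a\<in>#proots p. [:-a, 1:])"
  have coeff_p: "coeff p k = lead_coeff p * coeff Q k" for k
    unfolding Q_def by (metis coeff_smult complex_poly_decompose_multiset)
  have "p \<noteq> 0"
    using assms by auto
  with assms have "0 \<notin># proots p"
    by simp
  then have "coeff Q 1 = - coeff Q 0 * (\<Sum>a\<in>#proots p. 1 / a)"
    unfolding Q_def by (rule coeff_1_prod_linear_factors)
  then show ?thesis
    using coeff_p[of 1] coeff_p[of 0] by (simp only: mult.assoc mult_minus_left mult_minus_right)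
qed

lemma coeff_pred_degree_eq_Re_sum_proots:
  fixes P :: "real poly"
  assumes "degree P = Suc n"
  shows "coeff P n = - lead_coeff P * Re (sum_mset (proots (map_poly of_real P :: complex poly)))"
proof -
  have "coeff P n = Re (coeff (map_poly of_real P) n :: complex)"
    by (simp add: coeff_map_poly)
  also have "coeff (map_poly of_real P) n =
      - lead_coeff (map_poly of_real P) * sum_mset (proots (map_poly of_real P :: complex poly))"
    using assms by (intro coeff_pred_degree_complex_poly) (simp add: degree_map_poly)
  finally show ?thesis
    by (simp add: degree_map_poly coeff_map_poly)
qed

lemma coeff_1_eq_Re_sum_inverse_proots:
  fixes P :: "real poly"
  assumes "poly P 0 \<noteq> 0"
  shows "coeff P 1 = - coeff P 0 * Re (\<Sum>a\<in>#proots (map_poly of_real P :: complex poly). 1 / a)"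
proof -
  have "coeff P 1 = Re (coeff (map_poly of_real P) 1 :: complex)"
    by (simp add: coeff_map_poly)
  also have "coeff (map_poly of_real P) 1 =
      - coeff (map_poly of_real P) 0 * (\<Sum>a\<in>#proots (map_poly of_real P :: complex poly). 1 / a)"
    using assms by (intro coeff_1_complex_poly) (simp add: poly_0_coeff_0 coeff_map_poly)
  finally show ?thesis
    by (simp add: coeff_map_poly)
qed

lemma Re_sum_inverse_neg_if_Re_sum_pos:
  fixes x r :: real and R :: "complex multiset"
  assumes "0 < x" "r < 0" and R: "\<forall>a\<in>#R. Re a \<le> 0"
    and sum_pos: "0 < Re (sum_mset (add_mset (of_real x) (add_mset (of_real r) R)))"
  shows "Re (\<Sum>a\<in>#add_mset (of_real x) (add_mset (of_real r) R). 1 / a) < 0"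
proof -
  have "-r < x"
    using sum_pos Re_sum_mset_nonpos[OF R] by simp
  then have "1 / x < 1 / (-r)"
    using assms by (intro divide_strict_left_mono) (simp_all add: mult_pos_neg)
  then have "1 / x + 1 / r < 0"
    by simp
  moreover have "Re (\<Sum>a\<in>#R. 1 / a) \<le> 0"
    using R by (intro Re_sum_mset_nonpos) (simp add: Re_inverse_nonpos)
  ultimately show ?thesis
    by simp
qed

lemma degree_le_Suc_sum_count_proots_nonreal_pair_negative_roots:
  fixes P :: "real poly" and z :: complex
  defines "N \<equiv> {x. x < 0 \<and> poly P x = 0}"
  assumes "P \<noteq> 0" and z: "Im z \<noteq> 0" "poly (map_poly of_real P) z = 0"
    and neg: "(\<Sum>x\<in>N. order x P) + 3 = degree P"
  shows "degree P \<le> Suc (\<Sum>a\<in>insert z (insert (cnj z) (of_real ` N)). count (proots (map_poly of_real P)) a)"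
proof -
  let ?M = "proots (map_poly of_real P :: complex poly)"
  have "finite N"
    using poly_roots_finite[OF \<open>P \<noteq> 0\<close>] by (simp add: N_def)
  have "poly (map_poly of_real P) (cnj z) = 0"
    using z by (subst real_poly_cnj_root_iff) (simp_all add: coeff_map_poly)
  with z \<open>P \<noteq> 0\<close> have "1 \<le> count ?M z" "1 \<le> count ?M (cnj z)"
    by (auto simp: map_poly_eq_0_iff Suc_le_eq order_root)
  then have "1 + 1 + (\<Sum>x\<in>N. order x P) \<le> count ?M z + count ?M (cnj z) + (\<Sum>a\<in>of_real ` N. count ?M a)"
    using sum_order_le_sum_count_proots_map_poly_of_real[OF \<open>finite N\<close> \<open>P \<noteq> 0\<close>]
    by (intro add_mono)
  also have "\<dots> = (\<Sum>a\<in>insert z (insert (cnj z) (of_real ` N)). count ?M a)"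
  proof -
    have "z \<noteq> cnj z" "z \<notin> of_real ` N" "cnj z \<notin> of_real ` N"
      using z(1) by (auto simp: complex_eq_iff)
    then show ?thesis
      using \<open>finite N\<close> by (simp add: add.assoc)
  qed
  finally show ?thesis
    using neg by simp
qed

lemma proots_map_poly_of_real_decompose:
  fixes P :: "real poly" and z :: complex
  assumes deg: "degree P = k + 3" and "0 < k" and x0: "0 < x0" "poly P x0 = 0"
    and neg: "(\<Sum>x\<in>{x. x < 0 \<and> poly P x = 0}. order x P) = k"
    and z: "Im z \<noteq> 0" "Re z \<le> 0" "poly (map_poly of_real P) z = 0"
  obtains r R where "r < 0" "\<forall>a\<in>#R. Re a \<le> 0"
    "proots (map_poly of_real P) = add_mset (of_real x0) (add_mset (of_real r) R)"
proof -
  define M where "M = proots (map_poly of_real P :: complex poly)"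
  define N where "N = {x. x < 0 \<and> poly P x = 0}"
  define A where "A = insert z (insert (cnj z) (of_real ` N))"
  have "P \<noteq> 0"
    using deg by auto
  then have in_M: "a \<in># M \<longleftrightarrow> poly (map_poly of_real P) a = 0" for a
    by (simp add: M_def map_poly_eq_0_iff)
  have Re_A: "Re a \<le> 0" if "a \<in> A" for a
    using that z by (auto simp: A_def N_def)
  have "finite A"
    using poly_roots_finite[OF \<open>P \<noteq> 0\<close>] by (simp add: A_def N_def)
  moreover have "of_real x0 \<in># M"
    using x0 in_M by (simp add: poly_map_poly_of_real)
  moreover have "of_real x0 \<notin> A"
    using Re_A x0(1) by force
  moreover have "size M \<le> Suc (\<Sum>a\<in>A. count M a)"
    using degree_le_Suc_sum_count_proots_nonreal_pair_negative_roots[OF \<open>P \<noteq> 0\<close> z(1,3)] deg neg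
    by (simp add: M_def A_def N_def size_proots_complex degree_map_poly)
  ultimately have sub: "set_mset (M - {#of_real x0#}) \<subseteq> A"
    by (rule set_mset_remove1_subset_if_size_le)
  have "N \<noteq> {}"
    using neg \<open>0 < k\<close> unfolding N_def by (metis sum.empty less_irrefl)
  then obtain r where r: "r < 0" "poly P r = 0"
    by (auto simp: N_def)
  then have "of_real r \<in># M - {#of_real x0#}"
    using x0 in_M by (auto simp: poly_map_poly_of_real in_diff_count)
  show thesis
  proof
    show "\<forall>a\<in>#M - {#of_real x0#} - {#of_real r#}. Re a \<le> 0"
      using sub Re_A by (metis in_diffD subsetD)
    show "proots (map_poly of_real P) = add_mset (of_real x0) (add_mset (of_real r) (M - {#of_real x0#} - {#of_real r#}))"
      using \<open>of_real x0 \<in># M\<close> \<open>of_real r \<in># M - {#of_real x0#}\<close>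
      by (metis M_def insert_DiffM)
  qed (rule r)
qed

theorem lemma5:
  shows "\<not> (\<exists>P :: real poly.
      degree P = 11 \<and>
      coeff P 11 > 0 \<and>
      (\<forall>i\<in>{6..10}. coeff P i < 0) \<and>
      (\<forall>i\<in>{1..5}. coeff P i > 0) \<and>
      coeff P 0 < 0 \<and>
      (\<exists>!x. x > 0 \<and> poly P x = 0) \<and>
      (\<forall>x. x > 0 \<and> poly P x = 0 \<longrightarrow> order x P = 1) \<and>
      (\<Sum>x\<in>{x. x < 0 \<and> poly P x = 0}. order x P) = 8 \<and>
      (\<exists>z. Im z \<noteq> 0 \<and> Re z \<le> 0 \<and> poly (map_poly complex_of_real P) z = 0))"
proof (intro notI, elim exE conjE)
  fix P :: "real poly" and z :: complex
  assume deg: "degree P = 11" and a11: "coeff P 11 > 0" and a6_10: "\<forall>i\<in>{6..10}. coeff P i < 0"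
    and a1_5: "\<forall>i\<in>{1..5}. coeff P i > 0" and a0: "coeff P 0 < 0"
    and pos_root: "\<exists>!x. x > 0 \<and> poly P x = 0"
    and "\<forall>x. x > 0 \<and> poly P x = 0 \<longrightarrow> order x P = 1" \<comment> \<open>unused: counting roots forces this\<close>
    and neg_roots: "(\<Sum>x\<in>{x. x < 0 \<and> poly P x = 0}. order x P) = 8"
    and z: "Im z \<noteq> 0" "Re z \<le> 0" "poly (map_poly complex_of_real P) z = 0"
  define M where "M = proots (map_poly of_real P :: complex poly)"
  obtain x0 where x0: "0 < x0" "poly P x0 = 0"
    using pos_root by blast
  have "degree P = 8 + 3"
    using deg by simp
  then obtain r R where r: "r < 0" "\<forall>a\<in>#R. Re a \<le> 0"
    and M_eq: "M = add_mset (of_real x0) (add_mset (of_real r) R)"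
    unfolding M_def using proots_map_poly_of_real_decompose[OF _ zero_less_numeral x0 neg_roots z] by blast
  have "0 < Re (sum_mset M)"
    using coeff_pred_degree_eq_Re_sum_proots[of P 10] deg a11 a6_10[rule_format, of 10]
    by (simp add: M_def zero_less_mult_iff)
  moreover have "0 < Re (\<Sum>a\<in>#M. 1 / a)"
    using coeff_1_eq_Re_sum_inverse_proots[of P] a0 a1_5[rule_format, of 1]
    by (simp add: M_def poly_0_coeff_0 mult_less_0_iff)
  moreover have "Re (\<Sum>a\<in>#M. 1 / a) < 0"
    using Re_sum_inverse_neg_if_Re_sum_pos[OF x0(1) r] calculation(1) unfolding M_eq by blast
  ultimately show False
    by linarith
qed

end
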